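(* Let $\hat{\mathfrak{so}}$ be the extended Schr\"odinger-Virasoro algebra over $\mathbb{C}$ and, for $g\in\frac12\mathbb{Z}$, let $\Delta_g(\hat{\mathfrak{so}})$ be the space of $\frac12$-derivations of $\hat{\mathfrak{so}}$ of degree $g$. Then $\Delta_{j+\frac12}(\hat{\mathfrak{so}})=0$ for every $j\in\mathbb{Z}$.
   Context: The extended Schr\"odinger-Virasoro algebra $\hat{\mathfrak{so}}$ is the complex Lie algebra with basis $\{L_n,M_n,N_n,Y_{n+\frac12},C_L,C_{LN},C_N\mid n\in\mathbb{Z}\}$ and brackets (all others zero, $C_L,C_{LN},C_N$ central): $[L_m,L_n]=(n-m)L_{m+n}+\delta_{m+n,0}\frac{m^3-m}{12}C_L$, $[L_m,M_n]=nM_{m+n}$, $[L_m,N_n]=nN_{m+n}+\delta_{m+n,0}(m^2-m)C_{LN}$, $[N_m,M_n]=2M_{m+n}$, $[L_m,Y_{n+\frac12}]=(n+\frac{1-m}{2})Y_{m+n+\frac12}$, $[N_m,Y_{n+\frac12}]=Y_{m+n+\frac12}$, $[Y_{m+\frac12},Y_{n+\frac12}]=(m-n)M_{m+n+1}$, $[N_m,N_n]=n\delta_{m+n,0}C_N$, for all $m,n\in\mathbb{Z}$. It is $\frac12\mathbb{Z}$-graded by $\hat{\mathfrak{so}}_0=\langle L_0,M_0,N_0,C_L,C_{LN},C_N\rangle$, $\hat{\mathfrak{so}}_n=\langle L_n,M_n,N_n\rangle$ for $n\in\mathbb{Z}\setminus\{0\}$, $\hat{\mathfrak{so}}_{n+\frac12}=\langle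 Y_{n+\frac12}\rangle$. A $\frac12$-derivation of a Lie algebra $L$ is a linear map $\varphi:L\to L$ with $\varphi([x,y])=\frac12([\varphi(x),y]+[x,\varphi(y)])$ for all $x,y$. A $\frac12$-derivation $\varphi$ has degree $g$ if $\varphi(\hat{\mathfrak{so}}_h)\subseteq\hat{\mathfrak{so}}_{g+h}$ for all $h\in\frac12\mathbb{Z}$. *)

theory Defs
  imports Complex_Main
begin

text \<open>Basis of the extended Schroedinger-Virasoro algebra.
  Y n stands for Y_{n+1/2}.\<close>
datatype sv_basis = L int | M int | N int | Y int | CL | CLN | CN

text \<open>Elements are finitely supported coefficient functions on the basis.\<close>
type_synonym sv = "sv_basis \<Rightarrow> complex"

definition sv_space :: "sv set" where
  "sv_space = {x. finite {b. x b \<noteq> 0}}"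

definition e :: "sv_basis \<Rightarrow> sv" where
  "e b = (\<lambda>c. if c = b then 1 else 0)"

definition dlt :: "int \<Rightarrow> complex" where
  "dlt k = (if k = 0 then 1 else 0)"

fun brb :: "sv_basis \<Rightarrow> sv_basis \<Rightarrow> sv" where
  "brb (L m) (L n) = (\<lambda>c. of_int (n - m) * e (L (m + n)) c
       + dlt (m + n) * (of_int (m^3 - m) / 12) * e CL c)"
| "brb (L m) (M n) = (\<lambda>c. of_int n * e (M (m + n)) c)"
| "brb (M n) (L m) = (\<lambda>c. - of_int n * e (M (m + n)) c)"
| "brb (L m) (N n) = (\<lambda>c. of_int n * e (N (m + n)) c
       + dlt (m + n) * of_int (m^2 - m) * e CLN c)"
| "brb (N n) (L m) = (\<lambda>c. - (of_int n * e (N (m + n)) c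
       + dlt (m + n) * of_int (m^2 - m) * e CLN c))"
| "brb (N m) (M n) = (\<lambda>c. 2 * e (M (m + n)) c)"
| "brb (M n) (N m) = (\<lambda>c. - 2 * e (M (m + n)) c)"
| "brb (L m) (Y n) = (\<lambda>c. (of_int n + (1 - of_int m) / 2) * e (Y (m + n)) c)"
| "brb (Y n) (L m) = (\<lambda>c. - (of_int n + (1 - of_int m) / 2) * e (Y (m + n)) c)"
| "brb (N m) (Y n) = (\<lambda>c. e (Y (m + n)) c)"
| "brb (Y n) (N m) = (\<lambda>c. - e (Y (m + n)) c)"
| "brb (Y m) (Y n) = (\<lambda>c. of_int (m - n) * e (M (m + n + 1)) c)"
| "brb (N m) (N n) = (\<lambda>c. of_int n * dlt (m + n) * e CN c)"
| "brb _ _ = (\<lambda>c. 0)"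

definition br :: "sv \<Rightarrow> sv \<Rightarrow> sv" where
  "br x y = (\<lambda>c. \<Sum>a\<in>{a. x a \<noteq> 0}. \<Sum>b\<in>{b. y b \<noteq> 0}. x a * y b * brb a b c)"

text \<open>Twice the degree (so that degrees in (1/2)Z become integers).\<close>
fun deg2 :: "sv_basis \<Rightarrow> int" where
  "deg2 (L n) = 2 * n"
| "deg2 (M n) = 2 * n"
| "deg2 (N n) = 2 * n"
| "deg2 (Y n) = 2 * n + 1"
| "deg2 CL = 0"
| "deg2 CLN = 0"
| "deg2 CN = 0"

text \<open>Homogeneous component of degree d/2.\<close>
definition sv_hom :: "int \<Rightarrow> sv set" where
  "sv_hom d = {x \<in> sv_space. \<forall>b. x b \<noteq> 0 \<longrightarrow> deg2 b = d}"

definition is_linear_map :: "(sv \<Rightarrow> sv) \<Rightarrow> bool" where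
  "is_linear_map \<phi> \<longleftrightarrow> (\<forall>x\<in>sv_space. \<phi> x \<in> sv_space)
     \<and> (\<forall>x\<in>sv_space. \<forall>y\<in>sv_space. \<phi> (\<lambda>b. x b + y b) = (\<lambda>b. \<phi> x b + \<phi> y b))
     \<and> (\<forall>c::complex. \<forall>x\<in>sv_space. \<phi> (\<lambda>b. c * x b) = (\<lambda>b. c * \<phi> x b))"

definition half_derivation :: "(sv \<Rightarrow> sv) \<Rightarrow> bool" where
  "half_derivation \<phi> \<longleftrightarrow> is_linear_map \<phi> \<and>
     (\<forall>x\<in>sv_space. \<forall>y\<in>sv_space.
        \<phi> (br x y) = (\<lambda>c. (1/2) * (br (\<phi> x) y c + br x (\<phi> y) c)))"

text \<open>Degree g = g2/2.\<close>
definition has_degree2 :: "int \<Rightarrow> (sv \<Rightarrow> sv) \<Rightarrow> bool" where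
  "has_degree2 g2 \<phi> \<longleftrightarrow> (\<forall>h2. \<forall>x\<in>sv_hom h2. \<phi> x \<in> sv_hom (g2 + h2))"

end

theory Submission
  imports Defs
begin

text \<open>A half-derivation \<open>\<phi>\<close> of degree \<open>j + 1/2\<close> sends \<open>L\<^sub>0\<close> and \<open>N\<^sub>0\<close> to multiples
  \<open>a Y\<^bsub>j+1/2\<^esub>\<close> and \<open>c Y\<^bsub>j+1/2\<^esub>\<close>. Applying \<open>\<phi>\<close> to \<open>[N\<^sub>0, Y\<^bsub>j+3/2\<^esub>] = Y\<^bsub>j+3/2\<^esub>\<close> and
  comparing \<open>M\<^bsub>2j+2\<^esub>\<close>-coefficients gives \<open>c = 0\<close>; then \<open>[L\<^sub>0, N\<^sub>0] = 0\<close> gives \<open>a = 0\<close>.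
  With \<open>\<phi>(L\<^sub>0) = 0\<close>, applying \<open>\<phi>\<close> to \<open>[L\<^sub>0, x] = h x\<close> for \<open>x\<close> of degree \<open>h\<close> yields
  \<open>(h - j - 1/2) \<phi>(x) = 0\<close>, so \<open>\<phi>\<close> kills every basis vector except \<open>Y\<^bsub>j+1/2\<^esub>\<close>, and that one
  is the bracket \<open>[N\<^sub>1, Y\<^bsub>j-1/2\<^esub>]\<close> of two vectors already killed.\<close>

lemma e_in_sv_space: "e b \<in> sv_space"
  unfolding sv_space_def by (auto simp: e_def intro: finite_subset[of _ "{b}"])

lemma e_in_sv_hom: "e b \<in> sv_hom (deg2 b)"
  unfolding sv_hom_def using e_in_sv_space by (auto simp: e_def)

lemma deg2_eq_odd_iff: "deg2 b = 2 * k + 1 \<longleftrightarrow> b = Y k"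
  by (cases b) (auto, presburger+)

lemma br_scaled_e: "br (\<lambda>c. s * e p c) (\<lambda>c. t * e q c) = (\<lambda>c. s * t * brb p q c)"
proof (cases "s = 0 \<or> t = 0")
  case True
  then show ?thesis by (auto simp: br_def)
next
  case False
  then have "{c. s * e b c \<noteq> 0} = {b}" "{c. t * e b c \<noteq> 0} = {b}" for b
    by (auto simp: e_def)
  then show ?thesis by (simp add: br_def e_def)
qed

lemma br_e: "br (e p) (e q) = brb p q"
  using br_scaled_e[of 1 p 1 q] by simp

lemma br_zero_left: "br (\<lambda>c. 0) y = (\<lambda>c. 0)"
  by (simp add: br_def)

lemma br_zero_right: "br x (\<lambda>c. 0) = (\<lambda>c. 0)"
  by (simp add: br_def)

lemma br_e_left: "br (e a) y = (\<lambda>c. \<Sum>b\<in>{b. y b \<noteq> 0}. y b * brb a b c)"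
proof -
  have "{c. e a c \<noteq> 0} = {a}" by (auto simp: e_def)
  then show ?thesis by (simp add: br_def e_def)
qed

lemma sv_hom_odd_eq_scaled_Y:
  assumes "v \<in> sv_hom (2 * k + 1)"
  shows "v = (\<lambda>c. v (Y k) * e (Y k) c)"
proof
  fix c
  have "v c = 0" if "c \<noteq> Y k"
    using assms that deg2_eq_odd_iff by (auto simp: sv_hom_def)
  then show "v c = v (Y k) * e (Y k) c" by (auto simp: e_def)
qed

lemma brb_L0: "brb (L 0) b = (\<lambda>c. of_int (deg2 b) / 2 * e b c)"
  by (cases b) (auto simp: e_def dlt_def fun_eq_iff field_simps)

lemma br_L0_sv_hom:
  assumes "v \<in> sv_hom d"
  shows "br (e (L 0)) v = (\<lambda>c. of_int d / 2 * v c)"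
proof
  fix c
  have "br (e (L 0)) v c = (\<Sum>b\<in>{b. v b \<noteq> 0}. if b = c then of_int d / 2 * v c else 0)"
    unfolding br_e_left by (rule sum.cong) (use assms in \<open>auto simp: brb_L0 e_def sv_hom_def\<close>)
  also have "\<dots> = of_int d / 2 * v c"
    using assms by (simp add: sum.delta' sv_hom_def sv_space_def)
  finally show "br (e (L 0)) v c = of_int d / 2 * v c" .
qed

lemma br_N0_coeff_M:
  assumes "w \<in> sv_space"
  shows "br (e (N 0)) w (M k) = 2 * w (M k)"
proof -
  have "brb (N 0) b (M k) = (if b = M k then 2 else 0)" for b
    by (cases b) (auto simp: e_def dlt_def)
  then have "br (e (N 0)) w (M k) = (\<Sum>b\<in>{b. w b \<noteq> 0}. if b = M k then 2 * w (M k) else 0)"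
    unfolding br_e_left by (intro sum.cong) auto
  also have "\<dots> = 2 * w (M k)"
    using assms by (simp add: sum.delta' sv_space_def)
  finally show ?thesis .
qed

lemma linear_map_zero:
  assumes "is_linear_map \<phi>"
  shows "\<phi> (\<lambda>c. 0) = (\<lambda>c. 0)"
proof -
  have "\<phi> (\<lambda>c. 0 * e (L 0) c) = (\<lambda>c. 0 * \<phi> (e (L 0)) c)"
    using assms e_in_sv_space unfolding is_linear_map_def by blast
  then show ?thesis by simp
qed

lemma linear_map_eq_zero_if_basis:
  assumes lin: "is_linear_map \<phi>" and basis: "\<And>b. \<phi> (e b) = (\<lambda>c. 0)"
    and x: "x \<in> sv_space"
  shows "\<phi> x = (\<lambda>c. 0)"
proof -
  have "\<phi> x = (\<lambda>c. 0)" if "finite S" "x \<in> sv_space" "{b. x b \<noteq> 0} \<subseteq> S" for S x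
    using that
  proof (induction S arbitrary: x rule: finite_induct)
    case empty
    then have "x = (\<lambda>c. 0)" by auto
    then show ?case using linear_map_zero[OF lin] by simp
  next
    case (insert b S)
    define x' where "x' = x(b := 0)"
    have x': "x' \<in> sv_space"
      using insert.prems(1) unfolding sv_space_def x'_def by (auto elim: finite_subset[rotated])
    have "{c. x' c \<noteq> 0} \<subseteq> S"
      using insert.prems(2) by (auto simp: x'_def)
    then have "\<phi> x' = (\<lambda>c. 0)"
      using insert.IH[OF x'] by blast
    moreover have "\<phi> (\<lambda>c. x b * e b c) = (\<lambda>c. 0)"
      using lin e_in_sv_space basis by (simp add: is_linear_map_def)
    moreover have "(\<lambda>c. x b * e b c) \<in> sv_space"
      by (auto simp: sv_space_def e_def intro: finite_subset[of _ "{b}"])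
    ultimately have "\<phi> (\<lambda>c. x' c + x b * e b c) = (\<lambda>c. 0)"
      using lin x' unfolding is_linear_map_def by simp
    moreover have "(\<lambda>c. x' c + x b * e b c) = x"
      by (auto simp: x'_def e_def)
    ultimately show ?case by simp
  qed
  then show ?thesis using x by (simp add: sv_space_def)
qed

lemma half_derivation_brb:
  assumes "half_derivation \<phi>"
  shows "\<phi> (brb p q) = (\<lambda>c. (1/2) * (br (\<phi> (e p)) (e q) c + br (e p) (\<phi> (e q)) c))"
proof -
  have "\<phi> (br (e p) (e q)) = (\<lambda>c. (1/2) * (br (\<phi> (e p)) (e q) c + br (e p) (\<phi> (e q)) c))"
    using assms e_in_sv_space unfolding half_derivation_def by blast
  then show ?thesis by (simp only: br_e)
qed

lemma has_degree2_e:
  assumes "has_degree2 g \<phi>"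
  shows "\<phi> (e b) \<in> sv_hom (g + deg2 b)"
  using assms e_in_sv_hom unfolding has_degree2_def by blast

lemma half_derivation_vanishes_off_degree:
  assumes hd: "half_derivation \<phi>" and deg: "has_degree2 g \<phi>"
    and L0: "\<phi> (e (L 0)) = (\<lambda>c. 0)" and b: "deg2 b \<noteq> g"
  shows "\<phi> (e b) = (\<lambda>c. 0)"
proof
  fix c
  let ?h = "of_int (deg2 b) :: complex"
  have "\<phi> (brb (L 0) b) = (\<lambda>c. ?h / 2 * \<phi> (e b) c)"
    using hd e_in_sv_space unfolding half_derivation_def is_linear_map_def brb_L0 by blast
  moreover have "\<phi> (brb (L 0) b) = (\<lambda>c. 1/2 * (of_int (g + deg2 b) / 2 * \<phi> (e b) c))"
    using half_derivation_brb[OF hd, of "L 0" b] br_L0_sv_hom[OF has_degree2_e[OF deg]] L0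
    by (simp add: br_zero_left)
  ultimately have "?h / 2 * \<phi> (e b) c = 1/2 * (of_int (g + deg2 b) / 2 * \<phi> (e b) c)"
    by metis
  then have "(?h - of_int g) * \<phi> (e b) c = 0"
    by (simp add: field_simps)
  moreover have "?h - of_int g \<noteq> 0" using b by simp
  ultimately show "\<phi> (e b) c = 0" by simp
qed

lemma odd_half_derivation_N0_coeff:
  assumes hd: "half_derivation \<phi>" and deg: "has_degree2 (2 * j + 1) \<phi>"
  shows "\<phi> (e (N 0)) (Y j) = 0"
proof -
  define c where "c = \<phi> (e (N 0)) (Y j)"
  define w where "w = \<phi> (e (Y (j + 1)))"
  have "\<phi> (e (N 0)) = (\<lambda>x. c * e (Y j) x)"
    unfolding c_def using has_degree2_e[OF deg, of "N 0"] by (simp add: sv_hom_odd_eq_scaled_Y)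
  then have "br (\<phi> (e (N 0))) (e (Y (j + 1))) = (\<lambda>x. - c * e (M (2 * j + 2)) x)"
    using br_scaled_e[of c "Y j" 1 "Y (j + 1)"] by (simp add: add_ac)
  moreover have "brb (N 0) (Y (j + 1)) = e (Y (j + 1))"
    by (simp add: fun_eq_iff)
  ultimately have "w = (\<lambda>x. 1/2 * (- c * e (M (2 * j + 2)) x + br (e (N 0)) w x))"
    using half_derivation_brb[OF hd, of "N 0" "Y (j + 1)"] by (simp add: w_def)
  from fun_cong[OF this, of "M (2 * j + 2)"] show "c = 0"
    using br_N0_coeff_M has_degree2_e[OF deg] by (simp add: e_def w_def sv_hom_def)
qed

lemma odd_half_derivation_L0:
  assumes hd: "half_derivation \<phi>" and deg: "has_degree2 (2 * j + 1) \<phi>"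
  shows "\<phi> (e (L 0)) = (\<lambda>c. 0)"
proof -
  define a where "a = \<phi> (e (L 0)) (Y j)"
  have L0: "\<phi> (e (L 0)) = (\<lambda>x. a * e (Y j) x)"
    unfolding a_def using has_degree2_e[OF deg, of "L 0"] by (simp add: sv_hom_odd_eq_scaled_Y)
  have "\<phi> (e (N 0)) = (\<lambda>x. 0)"
    using sv_hom_odd_eq_scaled_Y has_degree2_e[OF deg, of "N 0"] odd_half_derivation_N0_coeff[OF hd deg]
    by fastforce
  moreover have "brb (L 0) (N 0) = (\<lambda>x. 0)"
    by (simp add: brb_L0)
  moreover have "br (\<phi> (e (L 0))) (e (N 0)) = (\<lambda>x. - a * e (Y j) x)"
    using br_scaled_e[of a "Y j" 1 "N 0"] by (simp add: L0)
  ultimately have "(\<lambda>x. 0) = (\<lambda>x. 1/2 * (- a * e (Y j) x))"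
    using half_derivation_brb[OF hd, of "L 0" "N 0"] linear_map_zero hd
    by (simp add: half_derivation_def br_zero_right)
  from fun_cong[OF this, of "Y j"] have "a = 0" by (simp add: e_def)
  then show ?thesis using L0 by simp
qed

theorem mainTheorem2:
  fixes j :: int and \<phi> :: "sv \<Rightarrow> sv"
  assumes "half_derivation \<phi>" and "has_degree2 (2 * j + 1) \<phi>"
  shows "\<forall>x\<in>sv_space. \<phi> x = (\<lambda>b. 0)"
proof -
  have off_Yj: "\<phi> (e b) = (\<lambda>c. 0)" if "b \<noteq> Y j" for b
    using half_derivation_vanishes_off_degree[OF assms odd_half_derivation_L0[OF assms]]
      that deg2_eq_odd_iff by blast
  have "\<phi> (e (Y j)) = (\<lambda>c. 0)"
  proof -
    have "brb (N 1) (Y (j - 1)) = e (Y j)" by (simp add: fun_eq_iff)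
    then show ?thesis
      using half_derivation_brb[OF assms(1), of "N 1" "Y (j - 1)"] off_Yj
      by (simp add: br_zero_left br_zero_right)
  qed
  then have "\<phi> (e b) = (\<lambda>c. 0)" for b
    using off_Yj by (cases "b = Y j") auto
  then show ?thesis
    using assms(1) linear_map_eq_zero_if_basis by (auto simp: half_derivation_def)
qed

end
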